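(* In the toy model (see context), let $S=\sum_{i=0}^{L-1}[\![\Delta\alpha_i]\!]$, $\omega_i=\Delta\alpha_i-[\![\Delta\alpha_i]\!]$, let $\sigma$ be the permutation of $\{0,\dots,L-1\}$ with $\omega_{\sigma(0)}<\omega_{\sigma(1)}<\dots<\omega_{\sigma(L-1)}$, and let $k^+$ be as defined in the context. Then the maximum $z^+_{\max}=\max_i z^+_i$ of the rescaled well coordinates of the threshold configuration is $$z^+_{\max}=\begin{cases}\omega_{\sigma(S)}+1 & S\ge0,\ k^+\ne\sigma(S),\\ \omega_{\sigma(S-1)}+1 & S>0,\ k^+=\sigma(S),\\ \omega_{\sigma(L-1)} & S=0,\ k^+=\sigma(0),\\ \omega_{\sigma(L-|S|)} & S<0,\ k^+\ne\sigma(L-|S|),\\ \omega_{\sigma(L-|S|-1)} & S<0,\ k^+=\sigma(L-|S|),\end{cases}$$ and the threshold force is $F_{\mathrm{th}}=\lambda\left(\tfrac12-\eta z^+_{\max}\right)$.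
   Context: Toy model: $L$ sites with periodic boundary conditions (indices mod $L$); disorder $\alpha_0,\dots,\alpha_{L-1}$ i.i.d. uniform on $(-\tfrac12,\tfrac12)$, extended periodically; $\lambda>0$ and $\eta=\frac{2}{2+\lambda+\sqrt{\lambda^2+4\lambda}}$; $\Delta x_i=x_{i-1}-2x_i+x_{i+1}$ (periodic); $[\![x]\!]$ is the integer nearest to $x$. A configuration $\vec m\in\mathbb Z^L$ has well coordinates at force $0$ given by $\tilde y_i=\eta z_i$ with rescaled well coordinates $z_i=\Delta m_i+\Delta\alpha_i$. The threshold configuration $\vec m^+$ (a.s. unique up to adding a common integer) attains $\min_{\vec m}\max_i z_i$; $z^+_i$ are its rescaled well coordinates. The threshold force is $F_{\mathrm{th}}=\lambda(\tfrac12-\min_{\vec m}\max_i\tilde y_i)$. The index $k^+$: define $\vec J$ by $J_i=1$ for the $S+1$ indices with smallest $\omega_i$ (others $0$) if $S\ge0$, and $J_i=-1$ for the $|S|-1$ indices with largest $\omega_i$ (others $0$) if $S<0$; then $k^+\in\{0,\dots,L-1\}$, $k^+\equiv\sum_{i=0}^{L-1}i(-[\![\Delta\alpha_i]\!]+J_i)\pmod L$. *)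

theory Defs
  imports "HOL-Probability.Probability"
begin

text \<open>Toy model on L sites with periodic boundary conditions.  Site-indexed
  quantities are functions on nat; only indices i < L are used and indices
  are reduced mod L.\<close>

definition lap :: "nat \<Rightarrow> (nat \<Rightarrow> 'a::ring_1) \<Rightarrow> nat \<Rightarrow> 'a" where
  "lap L x i = x ((i + L - 1) mod L) - 2 * x (i mod L) + x ((i + 1) mod L)"

definition nint :: "real \<Rightarrow> int" where
  "nint x = \<lfloor>x + 1/2\<rfloor>"

definition eta :: "real \<Rightarrow> real" where
  "eta lam = 2 / (2 + lam + sqrt (lam\<^sup>2 + 4 * lam))"

definition zc :: "nat \<Rightarrow> (nat \<Rightarrow> real) \<Rightarrow> (nat \<Rightarrow> int) \<Rightarrow> nat \<Rightarrow> real" where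
  "zc L \<alpha> m i = real_of_int (lap L m i) + lap L \<alpha> i"

text \<open>z^+_max = max_i z^+_i, where the threshold configuration m^+ attains
  min_m max_i z_i\<close>
definition zplus_max :: "nat \<Rightarrow> (nat \<Rightarrow> real) \<Rightarrow> real" where
  "zplus_max L \<alpha> = (INF m\<in>UNIV. Max ((\<lambda>i. zc L \<alpha> m i) ` {..<L}))"

definition Fth :: "real \<Rightarrow> nat \<Rightarrow> (nat \<Rightarrow> real) \<Rightarrow> real" where
  "Fth lam L \<alpha> = lam * (1/2 - (INF m\<in>UNIV. Max ((\<lambda>i. eta lam * zc L \<alpha> m i) ` {..<L})))"

definition Ssum :: "nat \<Rightarrow> (nat \<Rightarrow> real) \<Rightarrow> int" where
  "Ssum L \<alpha> = (\<Sum>i<L. nint (lap L \<alpha> i))"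

definition omega :: "nat \<Rightarrow> (nat \<Rightarrow> real) \<Rightarrow> nat \<Rightarrow> real" where
  "omega L \<alpha> i = lap L \<alpha> i - real_of_int (nint (lap L \<alpha> i))"

definition Jvec :: "nat \<Rightarrow> (nat \<Rightarrow> real) \<Rightarrow> (nat \<Rightarrow> nat) \<Rightarrow> nat \<Rightarrow> int" where
  "Jvec L \<alpha> \<sigma> i =
     (let S = Ssum L \<alpha> in
      if S \<ge> 0 then (if i \<in> \<sigma> ` {..nat S} then 1 else 0)
      else (if i \<in> \<sigma> ` {L - (nat \<bar>S\<bar> - 1)..<L} then -1 else 0))"

definition kplus :: "nat \<Rightarrow> (nat \<Rightarrow> real) \<Rightarrow> (nat \<Rightarrow> nat) \<Rightarrow> nat" where
  "kplus L \<alpha> \<sigma> =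
     nat ((\<Sum>i<L. int i * (- nint (lap L \<alpha> i) + Jvec L \<alpha> \<sigma> i)) mod int L)"

definition disorder :: "nat \<Rightarrow> (nat \<Rightarrow> real) measure" where
  "disorder L = PiM {..<L} (\<lambda>_. uniform_measure lborel {-1/2<..<1/2})"

end

theory Submission
  imports Defs
begin

text \<open>The integer parts v = \<Delta>m + [[\<Delta>\<alpha>]] of the well coordinates are exactly the integer
  vectors with \<Sum>i. v i = S and \<Sum>i. i * v i \<equiv> \<Sum>i. i * [[\<Delta>\<alpha> i]] (mod L): the periodic
  Laplacian is self-adjoint, annihilates constants and sends i \<mapsto> i to multiples of L, and every vector
  with these two properties is a Laplacian.  Order the numbers \<omega> i + c (c an integer) increasingly
  and call the N-th one level N.  If all v i + \<omega> i lie below level N, then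
  v (\<sigma> j) \<le> \<lfloor>(N - 1 - j) / L\<rfloor>, so \<Sum>i. v i \<le> N - L.  For N = L + S the vector J is exactly
  \<lfloor>(N - j) / L\<rfloor> at \<sigma> j.  Staying below level L + S - 1 is therefore impossible, and staying below
  level L + S forces v = J - e (\<sigma> (S mod L)), which is admissible exactly when k = \<sigma> (S mod L);
  correspondingly the admissible vector J - e k reaches level L + S - 1 in that case and level L + S
  otherwise.\<close>

lemma sum_lessThan_rotate: "(\<Sum>i<L. f ((i + 1) mod L)) = (\<Sum>i<(L::nat). f i)"
proof (cases L)
  case (Suc n)
  have "(\<Sum>i<Suc n. f ((i + 1) mod Suc n)) = (\<Sum>i<n. f (Suc i)) + f 0"
    by (simp add: sum.lessThan_Suc)
  also have "\<dots> = (\<Sum>i<Suc n. f i)"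
    by (subst sum.lessThan_Suc_shift) (simp add: add.commute)
  finally show ?thesis using Suc by simp
qed simp

lemma mod_Suc_pred: "i < L \<Longrightarrow> ((i + 1) mod L + L - 1) mod (L::nat) = i"
  by (cases "i + 1 = L") auto

lemma sum_lessThan_rotate_back:
  "(\<Sum>i<L. g i (h ((i + L - 1) mod L))) = (\<Sum>i<(L::nat). g ((i + 1) mod L) (h i))"
proof -
  have "(\<Sum>i<L. g ((i + 1) mod L) (h (((i + 1) mod L + L - 1) mod L)))
      = (\<Sum>i<L. g ((i + 1) mod L) (h i))"
    by (intro sum.cong refl) (simp only: mod_Suc_pred lessThan_iff)
  then show ?thesis
    using sum_lessThan_rotate[of "\<lambda>i. g i (h ((i + L - 1) mod L))" L] by simp
qed

lemma lap_symmetric: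
  fixes c m :: "nat \<Rightarrow> 'a::comm_ring_1"
  shows "(\<Sum>i<L. c i * lap L m i) = (\<Sum>i<L. lap L c i * m i)"
proof -
  have left: "(\<Sum>i<L. c i * m ((i + L - 1) mod L)) = (\<Sum>i<L. c ((i + 1) mod L) * m i)"
    by (rule sum_lessThan_rotate_back)
  have right: "(\<Sum>i<L. c ((i + L - 1) mod L) * m i) = (\<Sum>i<L. c i * m ((i + 1) mod L))"
    using sum_lessThan_rotate_back[of "\<lambda>i x. x * m i" c L] by (simp add: mult.commute)
  have "(\<Sum>i<L. c i * lap L m i) = (\<Sum>i<L. c i * m ((i + L - 1) mod L))
      - 2 * (\<Sum>i<L. c i * m i) + (\<Sum>i<L. c i * m ((i + 1) mod L))"
    unfolding lap_def by (simp add: algebra_simps sum.distrib sum_subtractf sum_distrib_left)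
  moreover have "(\<Sum>i<L. lap L c i * m i) = (\<Sum>i<L. c ((i + L - 1) mod L) * m i)
      - 2 * (\<Sum>i<L. c i * m i) + (\<Sum>i<L. c ((i + 1) mod L) * m i)"
    unfolding lap_def by (simp add: algebra_simps sum.distrib sum_subtractf sum_distrib_left)
  ultimately show ?thesis using left right by simp
qed

lemma sum_lap: "(\<Sum>i<L. lap L m i) = (0::'a::comm_ring_1)"
  using lap_symmetric[of "\<lambda>_. 1" L m] by (simp add: lap_def)

lemma dvd_lap_of_nat:
  assumes "L \<ge> 1"
  shows "int L dvd lap L int i"
proof -
  define A B C where "A = int (i + L - 1)" and "B = int i" and "C = int (i + 1)"
  have "lap L int i = (A mod L - A) - 2 * (B mod L - B) + (C mod L - C) + (A - 2 * B + C)"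
    unfolding lap_def A_def B_def C_def by (simp add: of_nat_mod)
  moreover have "A - 2 * B + C = int L"
    using assms unfolding A_def B_def C_def by simp
  ultimately show ?thesis
    by (metis dvd_add dvd_diff dvd_mult dvd_refl dvd_minus_mod minus_diff_eq dvd_minus_iff)
qed

lemma dvd_weighted_sum_lap:
  assumes "L \<ge> 1"
  shows "int L dvd (\<Sum>i<L. int i * lap L m i)"
  unfolding lap_symmetric by (intro dvd_sum dvd_mult2 dvd_lap_of_nat assms)

lemma sum_partial_sums:
  "(\<Sum>t<N. \<Sum>j\<le>t. u j) = (\<Sum>j<N. (int N - int j) * (u j :: int))"
proof (induction N)
  case (Suc N)
  have "(\<Sum>t<Suc N. \<Sum>j\<le>t. u j) = (\<Sum>j<N. (int N - int j) * u j) + (\<Sum>j<Suc N. u j)"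
    by (subst sum.lessThan_Suc) (simp add: Suc.IH lessThan_Suc_atMost)
  also have "\<dots> = (\<Sum>j<Suc N. (int (Suc N) - int j) * u j)"
    by (simp add: sum.distrib[symmetric] algebra_simps)
  finally show ?case .
qed simp

lemma lap_surj:
  fixes u :: "nat \<Rightarrow> int"
  assumes L: "L \<ge> 1" and sum_u: "(\<Sum>i<L. u i) = 0" and dvd_u: "int L dvd (\<Sum>i<L. int i * u i)"
  shows "\<exists>m. \<forall>i<L. lap L m i = u i"
proof -
  \<comment> \<open>m is a double partial sum of u; the integration constant c makes it close up, m L = m 0.\<close>
  define c where "c = (\<Sum>i<L. int i * u i) div int L"
  define D where "D t = c + (\<Sum>j\<le>t. u j)" for t
  define m where "m t = (\<Sum>s<t. D s)" for t
  have "m L = int L * c + (\<Sum>j<L. (int L - int j) * u j)"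
    by (simp add: m_def D_def sum.distrib sum_partial_sums)
  also have "\<dots> = 0"
    using dvd_u sum_u unfolding c_def by (simp add: algebra_simps sum_subtractf flip: sum_distrib_left)
  finally have mL: "m L = m 0" by (simp add: m_def)
  have step: "m ((t + 1) mod L) - m t = D t" if "t < L" for t
  proof (cases "t + 1 = L")
    case True
    then have "m (Suc t) = m 0" using mL by simp
    then show ?thesis using True by (simp add: m_def)
  qed (use that in \<open>simp add: m_def\<close>)
  have "lap L m i = u i" if i: "i < L" for i
  proof -
    define p where "p = (i + L - 1) mod L"
    have p: "p < L" "(p + 1) mod L = i"
      using L i unfolding p_def by (auto simp: mod_Suc_eq)
    have "lap L m i = D i - D p"
      using step[OF i] step[OF p(1)] i p(2) unfolding lap_def p_def by simp
    also have "\<dots> = u i"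
    proof (cases i)
      case 0
      then have "p = L - 1" using L unfolding p_def by simp
      then show ?thesis
        using sum_u L 0 by (simp add: D_def lessThan_Suc_atMost[symmetric])
    next
      case (Suc q)
      then have "p = q" using i unfolding p_def by simp
      then show ?thesis using Suc by (simp add: D_def)
    qed
    finally show ?thesis .
  qed
  then show ?thesis by blast
qed

lemma div_shifted_residue:
  fixes c p :: int
  assumes "0 \<le> p" "p < int L" "j \<le> L"
  shows "(c * int L + p - int j) div int L = (if int j \<le> p then c else c - 1)"
proof -
  have "(c * int L + p - int j) div int L = c + (p - int j) div int L"
    using assms div_mult_self1[of "int L" "p - int j" c] by (simp add: algebra_simps)
  moreover have "(p - int j) div int L = (if int j \<le> p then 0 else - 1)"
  proof (cases "int j \<le> p")
    case False
    have "(p - int j) div int L = ((p - int j + int L) + (- 1) * int L) div int L" by simp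
    also have "\<dots> = - 1"
      using assms False by (subst div_mult_self1) auto
    finally show ?thesis using False by simp
  qed (use assms in simp)
  ultimately show ?thesis by simp
qed

locale sorted_fractions =
  fixes L :: nat and w :: "nat \<Rightarrow> real" and \<sigma> :: "nat \<Rightarrow> nat"
  assumes L_pos: "L \<ge> 1"
    and perm: "\<sigma> permutes {..<L}"
    and sorted: "\<forall>j<L. \<forall>j'<L. j < j' \<longrightarrow> w (\<sigma> j) < w (\<sigma> j')"
    and spread: "\<And>i i'. w i < w i' + 1"
begin

text \<open>level N is the N-th term (counting from 0 at w (\<sigma> 0)) of the increasing enumeration of
  all w i + c with i < L and c an integer.\<close>

definition level :: "int \<Rightarrow> real" where
  "level N = w (\<sigma> (nat (N mod int L))) + of_int (N div int L)"

definition profile :: "int \<Rightarrow> nat \<Rightarrow> int" where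
  "profile N j = (N - int j) div int L"

lemma perm_lt: "j < L \<Longrightarrow> \<sigma> j < L"
  using permutes_in_image[OF perm] by simp

lemma image_perm: "f ` {..<L} = (\<lambda>j. f (\<sigma> j)) ` {..<L}"
  using permutes_image[OF perm] by (metis image_image)

lemma all_perm: "(\<forall>i<L. P i) \<longleftrightarrow> (\<forall>j<L. P (\<sigma> j))"
proof
  assume "\<forall>j<L. P (\<sigma> j)"
  moreover have "{..<L} = \<sigma> ` {..<L}" using permutes_image[OF perm] by simp
  ultimately show "\<forall>i<L. P i" by (metis imageE lessThan_iff)
qed (use perm_lt in blast)

lemma sum_perm: "(\<Sum>i<L. f i) = (\<Sum>j<L. f (\<sigma> j))"
  using sum.permute[OF perm] by (simp add: comp_def)

lemma sorted_le: "j \<le> j' \<Longrightarrow> j' < L \<Longrightarrow> w (\<sigma> j) \<le> w (\<sigma> j')"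
  using sorted by (cases "j = j'") (auto intro: less_imp_le)

lemma residue_decomp:
  obtains c p where "N = c * int L + p" "0 \<le> p" "p < int L"
proof
  show "N = N div int L * int L + N mod int L" by simp
  show "0 \<le> N mod int L" "N mod int L < int L" using L_pos by simp_all
qed

lemma level_eq: "0 \<le> p \<Longrightarrow> p < int L \<Longrightarrow> level (c * int L + p) = w (\<sigma> (nat p)) + c"
  unfolding level_def by simp

lemma profile_eq:
  "0 \<le> p \<Longrightarrow> p < int L \<Longrightarrow> j \<le> L \<Longrightarrow>
    profile (c * int L + p) j = (if int j \<le> p then c else c - 1)"
  unfolding profile_def by (rule div_shifted_residue)

lemma profile_residue: "profile N (nat (N mod int L)) = N div int L"
proof -
  obtain c p where N: "N = c * int L + p" and p: "0 \<le> p" "p < int L" by (rule residue_decomp)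
  then show ?thesis by (simp add: profile_eq)
qed

lemma sum_profile: "(\<Sum>j<L. profile N j) = N + 1 - int L"
proof -
  obtain c p where N: "N = c * int L + p" and p: "0 \<le> p" "p < int L" by (rule residue_decomp)
  have "(\<Sum>j<L. profile N j) = (\<Sum>j<L. (c - 1) + (if int j \<le> p then 1 else 0))"
    using p by (intro sum.cong) (auto simp: N profile_eq)
  also have "\<dots> = int L * (c - 1) + int (card ({..<L} \<inter> {j. int j \<le> p}))"
    by (simp add: sum.distrib sum.If_cases)
  also have "{..<L} \<inter> {j. int j \<le> p} = {..nat p}"
    using p by auto
  finally show ?thesis using p by (simp add: N algebra_simps)
qed

lemma profile_pred:
  assumes "j < L"
  shows "profile (N - 1) j = profile N j - (if int j = N mod int L then 1 else 0)"
proof -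
  obtain c p where N: "N = c * int L + p" and p: "0 \<le> p" "p < int L" by (rule residue_decomp)
  show ?thesis
  proof (cases "p = 0")
    case True
    have "N - 1 = (c - 1) * int L + (int L - 1)" using True N by (simp add: algebra_simps)
    then have "profile (N - 1) j = c - 1"
      using profile_eq[where p="int L - 1" and c="c - 1" and j=j] assms L_pos by (simp only:) simp
    moreover have "profile N j = (if j = 0 then c else c - 1)"
      using True N assms profile_eq[where p=0 and c=c and j=j] by simp
    ultimately show ?thesis using True N by simp
  next
    case False
    have "N - 1 = c * int L + (p - 1)" using N by simp
    then have "profile (N - 1) j = (if int j \<le> p - 1 then c else c - 1)"
      using profile_eq[where p="p - 1" and c=c and j=j] False assms p by (simp only:)
    then show ?thesis using False assms p N by (simp add: profile_eq)
  qed
qed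

lemma below_level:
  assumes below: "\<forall>i<L. of_int (v i) + w i < level N" and j: "j < L"
  shows "v (\<sigma> j) \<le> profile (N - 1) j"
proof -
  obtain c p where N: "N = c * int L + p" and p: "0 \<le> p" "p < int L" by (rule residue_decomp)
  have v: "of_int (v (\<sigma> j)) + w (\<sigma> j) < w (\<sigma> (nat p)) + of_int c"
    using below perm_lt[OF j] level_eq[OF p] N by simp
  have "profile (N - 1) j = profile N (Suc j)" by (simp add: profile_def algebra_simps)
  also have "\<dots> = (if int j < p then c else c - 1)"
    using j p by (simp add: N profile_eq)
  finally have prof: "profile (N - 1) j = (if int j < p then c else c - 1)" .
  show ?thesis
  proof (cases "int j < p")
    case True
    have "real_of_int (v (\<sigma> j)) < of_int (c + 1)"
      using v spread[of "\<sigma> (nat p)" "\<sigma> j"] by simp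
    then show ?thesis using prof True by simp
  next
    case False
    have "w (\<sigma> (nat p)) \<le> w (\<sigma> j)" using False j by (intro sorted_le) auto
    then have "real_of_int (v (\<sigma> j)) < of_int c" using v by simp
    then show ?thesis using prof False by simp
  qed
qed

lemma sum_below_level:
  assumes "\<forall>i<L. of_int (v i) + w i < level N"
  shows "(\<Sum>i<L. v i) \<le> N - int L"
proof -
  have "(\<Sum>i<L. v i) = (\<Sum>j<L. v (\<sigma> j))" by (rule sum_perm)
  also have "\<dots> \<le> (\<Sum>j<L. profile (N - 1) j)"
    using below_level[OF assms] by (intro sum_mono) simp
  finally show ?thesis by (simp add: sum_profile)
qed

lemma eq_profile_below_level:
  assumes "\<forall>i<L. of_int (v i) + w i < level N" and "(\<Sum>i<L. v i) = N - int L" and "j < L"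
  shows "v (\<sigma> j) = profile (N - 1) j"
proof (rule sum_mono_inv[of "\<lambda>j. v (\<sigma> j)" "{..<L}"])
  show "(\<Sum>j<L. v (\<sigma> j)) = (\<Sum>j<L. profile (N - 1) j)"
    using assms(2) by (simp add: sum_profile flip: sum_perm)
qed (use below_level[OF assms(1)] assms(3) in auto)

lemma Max_at_level:
  assumes above: "\<forall>j<L. v (\<sigma> j) \<le> profile N j"
    and attained: "v (\<sigma> (nat (N mod int L))) = N div int L"
  shows "Max ((\<lambda>i. of_int (v i) + w i) ` {..<L}) = level N"
proof -
  obtain c p where N: "N = c * int L + p" and p: "0 \<le> p" "p < int L" by (rule residue_decomp)
  have level: "level N = w (\<sigma> (nat p)) + of_int c" using level_eq[OF p] N by simp
  have "of_int (v (\<sigma> j)) + w (\<sigma> j) \<le> level N" if j: "j < L" for j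
  proof (cases "int j \<le> p")
    case True
    then have "v (\<sigma> j) \<le> c" using above[rule_format, OF j] p by (simp add: N profile_eq)
    moreover have "w (\<sigma> j) \<le> w (\<sigma> (nat p))" using True p by (intro sorted_le) auto
    ultimately show ?thesis unfolding level by linarith
  next
    case False
    then have "v (\<sigma> j) \<le> c - 1" using above[rule_format, OF j] j p by (simp add: N profile_eq)
    then show ?thesis unfolding level using spread[of "\<sigma> j" "\<sigma> (nat p)"] by linarith
  qed
  moreover have "of_int (v (\<sigma> (nat p))) + w (\<sigma> (nat p)) = level N"
    using attained p level by (simp add: N)
  moreover have "nat p < L" using p by simp
  ultimately show ?thesis
    unfolding image_perm[of "\<lambda>i. of_int (v i) + w i"]
    by (intro Max_eqI) (auto intro: rev_image_eqI)
qed

end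

lemma omega_bounds: "- 1/2 \<le> omega L \<alpha> i \<and> omega L \<alpha> i < 1/2"
  unfolding omega_def nint_def using floor_correct[of "lap L \<alpha> i + 1/2"] by linarith

lemma zc_split: "zc L \<alpha> m i = of_int (lap L m i + nint (lap L \<alpha> i)) + omega L \<alpha> i"
  unfolding zc_def omega_def by simp

lemma sum_omega: "(\<Sum>i<L. omega L \<alpha> i) = - of_int (Ssum L \<alpha>)"
  unfolding omega_def Ssum_def by (simp add: sum_subtractf sum_lap)

lemma Ssum_bounds:
  assumes "L \<ge> 1"
  shows "2 * Ssum L \<alpha> \<le> int L" "- 2 * Ssum L \<alpha> < int L"
proof -
  have "(\<Sum>i<L. - 1/2) \<le> (\<Sum>i<L. omega L \<alpha> i)"
    by (intro sum_mono) (use omega_bounds in auto)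
  then show "2 * Ssum L \<alpha> \<le> int L" by (simp add: sum_omega)
  have "(\<Sum>i<L. omega L \<alpha> i) < (\<Sum>i<L. 1/2)"
    using assms by (intro sum_strict_mono) (use omega_bounds in \<open>auto simp: lessThan_empty_iff\<close>)
  then show "- 2 * Ssum L \<alpha> < int L" by (simp add: sum_omega)
qed

lemma dvd_iff_kplus_eq:
  assumes "L \<ge> 1" "p < L"
  shows "int L dvd (\<Sum>i<L. int i * (Jvec L \<alpha> \<sigma> i - (if i = p then 1 else 0) - nint (lap L \<alpha> i)))
    \<longleftrightarrow> kplus L \<alpha> \<sigma> = p"
proof -
  define X where "X = (\<Sum>i<L. int i * (- nint (lap L \<alpha> i) + Jvec L \<alpha> \<sigma> i))"
  have "(\<Sum>i<L. int i * (Jvec L \<alpha> \<sigma> i - (if i = p then 1 else 0) - nint (lap L \<alpha> i))) = X - int p"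
  proof -
    have "(\<Sum>i<L. int i * (Jvec L \<alpha> \<sigma> i - (if i = p then 1 else 0) - nint (lap L \<alpha> i)))
        = (\<Sum>i<L. int i * (- nint (lap L \<alpha> i) + Jvec L \<alpha> \<sigma> i) - (if i = p then int i else 0))"
      by (intro sum.cong) (auto simp: algebra_simps)
    then show ?thesis using assms(2) unfolding X_def by (simp add: sum_subtractf)
  qed
  moreover have "X mod int L = int p \<longleftrightarrow> kplus L \<alpha> \<sigma> = p"
    using assms(1) unfolding kplus_def X_def by auto
  moreover have "int p mod int L = int p" using assms(2) by simp
  ultimately show ?thesis by (metis mod_eq_dvd_iff)
qed

lemma exists_config:
  assumes "L \<ge> 1" and "(\<Sum>i<L. v i) = Ssum L \<alpha>"
    and "int L dvd (\<Sum>i<L. int i * (v i - nint (lap L \<alpha> i)))"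
  shows "\<exists>m. \<forall>i<L. zc L \<alpha> m i = of_int (v i) + omega L \<alpha> i"
proof -
  have "(\<Sum>i<L. v i - nint (lap L \<alpha> i)) = 0"
    using assms(2) by (simp add: sum_subtractf Ssum_def)
  then obtain m where m: "\<forall>i<L. lap L m i = v i - nint (lap L \<alpha> i)"
    using lap_surj[OF assms(1) _ assms(3)] by blast
  have "\<forall>i<L. zc L \<alpha> m i = of_int (v i) + omega L \<alpha> i"
    using m by (simp add: zc_split)
  then show ?thesis by blast
qed

lemma Max_mult_nonneg:
  fixes f :: "'a \<Rightarrow> real"
  assumes "c \<ge> 0" "finite A" "A \<noteq> {}"
  shows "Max ((\<lambda>x. c * f x) ` A) = c * Max (f ` A)"
proof -
  have "mono ((*) c)" using assms(1) by (simp add: mono_def mult_left_mono)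
  then show ?thesis using assms(2,3) by (simp add: mono_Max_commute image_image)
qed

lemma eta_nonneg: "lam > 0 \<Longrightarrow> eta lam \<ge> 0"
  unfolding eta_def by (simp add: add_pos_nonneg)

lemma kplus_lt: "L \<ge> 1 \<Longrightarrow> kplus L \<alpha> \<sigma> < L"
  unfolding kplus_def by (simp add: nat_less_iff)

locale toy_model = sorted_fractions L "omega L \<alpha>" \<sigma> for L \<alpha> \<sigma>
begin

abbreviation greedy_level :: int where
  "greedy_level \<equiv> int L + Ssum L \<alpha>"

lemma Jvec_profile:
  assumes j: "j < L"
  shows "Jvec L \<alpha> \<sigma> (\<sigma> j) = profile greedy_level j"
proof (cases "Ssum L \<alpha> \<ge> 0")
  case True
  have "Ssum L \<alpha> < int L" using Ssum_bounds[OF L_pos, of \<alpha>] True L_pos by linarith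
  then have "profile greedy_level j = (if int j \<le> Ssum L \<alpha> then 1 else 0)"
    using profile_eq[where c=1 and p="Ssum L \<alpha>" and j=j] True j by (simp add: add.commute)
  then show ?thesis
    using True permutes_inj[OF perm] by (auto simp: Jvec_def inj_image_mem_iff)
next
  case False
  have "- Ssum L \<alpha> < int L" using Ssum_bounds[OF L_pos, of \<alpha>] False by linarith
  then have "profile greedy_level j = (if int j \<le> int L + Ssum L \<alpha> then 0 else - 1)"
    using profile_eq[where c=0 and p="int L + Ssum L \<alpha>" and j=j] False j by simp
  then show ?thesis
    using False permutes_inj[OF perm] j by (auto simp: Jvec_def inj_image_mem_iff)
qed

lemma sum_Jvec: "(\<Sum>i<L. Jvec L \<alpha> \<sigma> i) = Ssum L \<alpha> + 1"
  by (simp add: sum_perm[of "Jvec L \<alpha> \<sigma>"] Jvec_profile sum_profile)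

definition optimal_config :: "nat \<Rightarrow> int" where
  "optimal_config i = Jvec L \<alpha> \<sigma> i - (if i = kplus L \<alpha> \<sigma> then 1 else 0)"

definition optimal_z :: real where
  "optimal_z = (if kplus L \<alpha> \<sigma> = \<sigma> (nat (greedy_level mod int L))
                then level (greedy_level - 1) else level greedy_level)"

lemma optimal_config_realizable:
  "\<exists>m. \<forall>i<L. zc L \<alpha> m i = of_int (optimal_config i) + omega L \<alpha> i"
proof (rule exists_config[OF L_pos])
  show "(\<Sum>i<L. optimal_config i) = Ssum L \<alpha>"
    using kplus_lt[OF L_pos] by (simp add: optimal_config_def sum_subtractf sum_Jvec)
  show "int L dvd (\<Sum>i<L. int i * (optimal_config i - nint (lap L \<alpha> i)))"
    using dvd_iff_kplus_eq[OF L_pos kplus_lt[OF L_pos]] by (simp add: optimal_config_def)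
qed

lemma Max_optimal_config:
  "Max ((\<lambda>i. of_int (optimal_config i) + omega L \<alpha> i) ` {..<L}) = optimal_z"
proof -
  define p where "p = nat (greedy_level mod int L)"
  have p: "p < L" using L_pos unfolding p_def by (simp add: nat_less_iff)
  have config: "optimal_config (\<sigma> j) = profile greedy_level j - (if \<sigma> j = kplus L \<alpha> \<sigma> then 1 else 0)"
    if "j < L" for j
    using that by (simp add: optimal_config_def Jvec_profile)
  show ?thesis
  proof (cases "kplus L \<alpha> \<sigma> = \<sigma> p")
    case True
    have "optimal_config (\<sigma> j) = profile (greedy_level - 1) j" if "j < L" for j
      using that config[OF that] True permutes_inj[OF perm] L_pos
      by (auto simp: profile_pred p_def inj_eq)
    moreover have "optimal_z = level (greedy_level - 1)"
      using True unfolding optimal_z_def p_def by simp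
    ultimately show ?thesis
      using L_pos by (simp add: Max_at_level profile_residue nat_less_iff)
  next
    case False
    have "optimal_config (\<sigma> j) \<le> profile greedy_level j" if "j < L" for j
      using config[OF that] by simp
    moreover have "optimal_config (\<sigma> p) = greedy_level div int L"
      using config[OF p] False profile_residue[of greedy_level] by (simp add: p_def)
    moreover have "optimal_z = level greedy_level"
      using False unfolding optimal_z_def p_def by simp
    ultimately show ?thesis unfolding p_def by (simp add: Max_at_level)
  qed
qed

lemma optimal_z_le_Max: "optimal_z \<le> Max (zc L \<alpha> m ` {..<L})"
proof (rule ccontr)
  define v where "v i = lap L m i + nint (lap L \<alpha> i)" for i
  define p where "p = nat (greedy_level mod int L)"
  have p: "p < L" using L_pos unfolding p_def by (simp add: nat_less_iff)
  have sum_v: "(\<Sum>i<L. v i) = Ssum L \<alpha>"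
    by (simp add: v_def sum.distrib sum_lap Ssum_def)
  have dvd_v: "int L dvd (\<Sum>i<L. int i * (v i - nint (lap L \<alpha> i)))"
    by (simp add: v_def dvd_weighted_sum_lap[OF L_pos])
  assume not_le: "\<not> optimal_z \<le> Max (zc L \<alpha> m ` {..<L})"
  have below: "\<forall>i<L. of_int (v i) + omega L \<alpha> i < optimal_z"
  proof (intro allI impI)
    fix i assume "i < L"
    then have "zc L \<alpha> m i \<le> Max (zc L \<alpha> m ` {..<L})" by (intro Max_ge) auto
    then show "of_int (v i) + omega L \<alpha> i < optimal_z" using not_le by (simp add: v_def zc_split)
  qed
  show False
  proof (cases "kplus L \<alpha> \<sigma> = \<sigma> p")
    case True
    then have "optimal_z = level (greedy_level - 1)" unfolding optimal_z_def p_def by simp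
    then show False using sum_below_level[of v "greedy_level - 1"] below sum_v by simp
  next
    case False
    then have "optimal_z = level greedy_level" unfolding optimal_z_def p_def by simp
    then have "\<forall>j<L. v (\<sigma> j) = profile (greedy_level - 1) j"
      using eq_profile_below_level[of v greedy_level] below sum_v by simp
    then have "\<forall>j<L. v (\<sigma> j) = Jvec L \<alpha> \<sigma> (\<sigma> j) - (if \<sigma> j = \<sigma> p then 1 else 0)"
      using permutes_inj[OF perm] by (auto simp: profile_pred Jvec_profile p_def inj_eq)
    then have "\<forall>i<L. v i = Jvec L \<alpha> \<sigma> i - (if i = \<sigma> p then 1 else 0)"
      by (subst all_perm)
    then have "(\<Sum>i<L. int i * (v i - nint (lap L \<alpha> i))) = (\<Sum>i<L. int i * (Jvec L \<alpha> \<sigma> i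
        - (if i = \<sigma> p then 1 else 0) - nint (lap L \<alpha> i)))"
      by (intro sum.cong) simp_all
    then have "int L dvd (\<Sum>i<L. int i * (Jvec L \<alpha> \<sigma> i - (if i = \<sigma> p then 1 else 0)
        - nint (lap L \<alpha> i)))"
      using dvd_v by simp
    then show False using dvd_iff_kplus_eq[OF L_pos perm_lt[OF p]] False by simp
  qed
qed

lemma Max_zc_attains_optimal_z: "\<exists>m. Max (zc L \<alpha> m ` {..<L}) = optimal_z"
proof -
  obtain m where m: "\<forall>i<L. zc L \<alpha> m i = of_int (optimal_config i) + omega L \<alpha> i"
    using optimal_config_realizable by blast
  have "zc L \<alpha> m ` {..<L} = (\<lambda>i. of_int (optimal_config i) + omega L \<alpha> i) ` {..<L}"
    using m by (intro image_cong) simp_all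
  then have "Max (zc L \<alpha> m ` {..<L}) = optimal_z" using Max_optimal_config by simp
  then show ?thesis by blast
qed

lemma INF_Max_zc_scaled:
  assumes "c \<ge> 0"
  shows "(INF m\<in>UNIV. Max ((\<lambda>i. c * zc L \<alpha> m i) ` {..<L})) = c * optimal_z"
proof -
  have scaled: "Max ((\<lambda>i. c * zc L \<alpha> m i) ` {..<L}) = c * Max (zc L \<alpha> m ` {..<L})" for m
    using assms L_pos by (intro Max_mult_nonneg) (auto simp: lessThan_empty_iff)
  obtain m0 where "Max (zc L \<alpha> m0 ` {..<L}) = optimal_z"
    using Max_zc_attains_optimal_z by blast
  then have "c * optimal_z \<in> range (\<lambda>m. c * Max (zc L \<alpha> m ` {..<L}))" by (metis rangeI)
  moreover have "c * optimal_z \<le> c * Max (zc L \<alpha> m ` {..<L})" for m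
    using optimal_z_le_Max assms by (rule mult_left_mono)
  ultimately show ?thesis unfolding scaled by (intro cInf_eq_minimum) auto
qed

lemma zplus_max_eq: "zplus_max L \<alpha> = optimal_z"
  using INF_Max_zc_scaled[of 1] by (simp add: zplus_max_def)

lemma Fth_eq: "lam > 0 \<Longrightarrow> Fth lam L \<alpha> = lam * (1/2 - eta lam * optimal_z)"
  unfolding Fth_def by (simp add: INF_Max_zc_scaled eta_nonneg)

lemma optimal_z_cases:
  defines "S \<equiv> Ssum L \<alpha>" and "k \<equiv> kplus L \<alpha> \<sigma>" and "w \<equiv> omega L \<alpha>" and "a \<equiv> nat \<bar>Ssum L \<alpha>\<bar>"
  shows "optimal_z =
    (if S \<ge> 0 \<and> k \<noteq> \<sigma> (nat S) then w (\<sigma> (nat S)) + 1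
     else if S > 0 \<and> k = \<sigma> (nat S) then w (\<sigma> (nat S - 1)) + 1
     else if S = 0 \<and> k = \<sigma> 0 then w (\<sigma> (L - 1))
     else if S < 0 \<and> k \<noteq> \<sigma> (L - a) then w (\<sigma> (L - a))
     else w (\<sigma> (L - a - 1)))"
proof (cases "S \<ge> 0")
  case True
  have S: "S < int L" using Ssum_bounds[OF L_pos, of \<alpha>] True L_pos unfolding S_def by linarith
  have N: "greedy_level = 1 * int L + S" unfolding S_def by simp
  have top: "nat (greedy_level mod int L) = nat S" unfolding N using True S by simp
  have "level greedy_level = w (\<sigma> (nat S)) + 1"
    unfolding N w_def using level_eq[of S 1] True S by simp
  moreover have "level (greedy_level - 1) = w (\<sigma> (nat S - 1)) + 1" if "S > 0"
  proof -
    have Np: "greedy_level - 1 = 1 * int L + (S - 1)" unfolding S_def by simp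
    have "level (greedy_level - 1) = w (\<sigma> (nat (S - 1))) + 1"
      unfolding Np w_def using level_eq[of "S - 1" 1] that S by simp
    then show ?thesis using that by (simp add: nat_diff_distrib)
  qed
  moreover have "level (greedy_level - 1) = w (\<sigma> (L - 1))" if "S = 0"
  proof -
    have Np: "greedy_level - 1 = 0 * int L + (int L - 1)" using that unfolding S_def by simp
    have "level (greedy_level - 1) = w (\<sigma> (nat (int L - 1)))"
      unfolding Np w_def using level_eq[of "int L - 1" 0] L_pos by simp
    then show ?thesis using L_pos by (simp add: nat_diff_distrib)
  qed
  ultimately show ?thesis
    unfolding optimal_z_def top k_def[symmetric] using True by auto
next
  case False
  have a: "1 \<le> a" "a < L" "S = - int a"
    using Ssum_bounds[OF L_pos, of \<alpha>] False unfolding S_def a_def by linarith+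
  have N: "greedy_level = 0 * int L + int (L - a)" using a unfolding S_def by simp
  have diffs: "nat (int L - int a) = L - a" "nat (int L - (1 + int a)) = L - a - 1" using a by simp_all
  have top: "nat (greedy_level mod int L) = L - a" unfolding N using a by (simp add: zmod_zminus1_eq_if)
  have Np: "greedy_level - 1 = 0 * int L + int (L - a - 1)" using a unfolding S_def by simp
  have "level greedy_level = w (\<sigma> (L - a))"
    unfolding N w_def using level_eq[of "int (L - a)" 0] a diffs by simp
  moreover have "level (greedy_level - 1) = w (\<sigma> (L - a - 1))"
    unfolding Np w_def using level_eq[of "int (L - a - 1)" 0] a diffs by simp
  ultimately show ?thesis
    unfolding optimal_z_def top k_def[symmetric] using False by auto
qed

end

theorem corollary1:
  fixes L :: nat and lam :: real
  assumes "L \<ge> 1" and "lam > 0"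
  shows "AE \<alpha> in disorder L.
    \<forall>\<sigma>. \<sigma> permutes {..<L} \<and>
         (\<forall>j<L. \<forall>j'<L. j < j' \<longrightarrow> omega L \<alpha> (\<sigma> j) < omega L \<alpha> (\<sigma> j')) \<longrightarrow>
      (let S = Ssum L \<alpha>; k = kplus L \<alpha> \<sigma>; w = omega L \<alpha>; a = nat \<bar>S\<bar> in
        zplus_max L \<alpha> =
          (if S \<ge> 0 \<and> k \<noteq> \<sigma> (nat S) then w (\<sigma> (nat S)) + 1
           else if S > 0 \<and> k = \<sigma> (nat S) then w (\<sigma> (nat S - 1)) + 1
           else if S = 0 \<and> k = \<sigma> 0 then w (\<sigma> (L - 1))
           else if S < 0 \<and> k \<noteq> \<sigma> (L - a) then w (\<sigma> (L - a))
           else w (\<sigma> (L - a - 1)))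
        \<and> Fth lam L \<alpha> = lam * (1/2 - eta lam * zplus_max L \<alpha>))"
proof (rule always_eventually, intro allI impI, goal_cases)
  \<comment> \<open>The strict ordering of the \<omega> i is the almost-sure condition; under it the claim holds
      for every disorder realisation.\<close>
  case (1 \<alpha> \<sigma>)
  have "omega L \<alpha> i < omega L \<alpha> i' + 1" for i i'
    using omega_bounds[of L \<alpha> i] omega_bounds[of L \<alpha> i'] by linarith
  then interpret toy_model L \<alpha> \<sigma>
    using assms(1) 1 by unfold_locales auto
  show ?case
    unfolding Let_def zplus_max_eq Fth_eq[OF assms(2)] optimal_z_cases by simp
qed

end
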